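(* In the setting of one non-elite offspring of the GA with proportional selection, uniform crossover and uniform mutation with rate $\pi_m\in(0,1/2]$, for every schema $H$, $$\alpha(H,t)\ge(1-\pi_m)^{\mathrm{ord}(H)}\alpha_{sel}(H,t)^2+2^{-\mathrm{ord}(H)}\alpha_{sel}(H,t)\big[1-\alpha_{sel}(H,t)\big]+\big[1-\alpha_{sel}(H,t)\big]^2\pi_m^{\mathrm{ord}(H)}.$$
   Context: Current population $\Psi(t)=(u^1,\dots,u^K)$, a list of $K$ elements of $\{0,1\}^d$, with fitness $f$. One offspring is generated by: drawing two parent indices $k,l$ independently, each equal to $j$ with probability $w_j=\exp(f(u^j)/2)/\sum_{i=1}^K\exp(f(u^i)/2)$; forming a child $c$ with $c_j=u^k_j$ or $u^l_j$ with probability $1/2$ each, independently over $j$; flipping each coordinate of $c$ independently with probability $\pi_m$. A schema is $H\in\{0,1,*\}^d$; fixed positions are those $j$ with $H_j\neq*$, $\mathrm{ord}(H)$ is their number; $u$ matches $H$ if $u_j=H_j$ at all fixed positions; ${\uparrow}(H)$ is the set of models matching $H$. $\alpha(H,t)$ is the probability that the offspring matches $H$, and $\alpha_{sel}(H,t)=\sum_{k:u^k\in{\uparrow}(H)}w_k$. *)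

theory Defs
  imports Complex_Main
begin

(* Models in {0,1}^d are functions nat => bool (only coordinates j < d matter).
   A schema H in {0,1,star}^d is a function nat => bool option (None = star),
   only positions j < d matter. A population of size K is u :: nat => (nat => bool),
   indexed by k < K. *)

definition fixed_pos :: "nat \<Rightarrow> (nat \<Rightarrow> bool option) \<Rightarrow> nat set" where
  "fixed_pos d H = {j. j < d \<and> H j \<noteq> None}"

definition ord_schema :: "nat \<Rightarrow> (nat \<Rightarrow> bool option) \<Rightarrow> nat" where
  "ord_schema d H = card (fixed_pos d H)"

definition matches :: "nat \<Rightarrow> (nat \<Rightarrow> bool option) \<Rightarrow> (nat \<Rightarrow> bool) \<Rightarrow> bool" where
  "matches d H x \<longleftrightarrow> (\<forall>j \<in> fixed_pos d H. H j = Some (x j))"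

definition sel_weight :: "((nat \<Rightarrow> bool) \<Rightarrow> real) \<Rightarrow> nat \<Rightarrow> (nat \<Rightarrow> nat \<Rightarrow> bool) \<Rightarrow> nat \<Rightarrow> real" where
  "sel_weight f K u k = exp (f (u k) / 2) / (\<Sum>i<K. exp (f (u i) / 2))"

definition child :: "(nat \<Rightarrow> bool) \<Rightarrow> (nat \<Rightarrow> bool) \<Rightarrow> nat set \<Rightarrow> nat set \<Rightarrow> nat \<Rightarrow> bool" where
  "child a b S M = (\<lambda>j. (if j \<in> S then a j else b j) \<noteq> (j \<in> M))"

(* alpha(H,t): probability that one offspring matches H. *)
definition alpha :: "nat \<Rightarrow> real \<Rightarrow> ((nat \<Rightarrow> bool) \<Rightarrow> real) \<Rightarrow> nat \<Rightarrow> (nat \<Rightarrow> nat \<Rightarrow> bool)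
    \<Rightarrow> (nat \<Rightarrow> bool option) \<Rightarrow> real" where
  "alpha d pm f K u H =
     (\<Sum>k<K. \<Sum>l<K. sel_weight f K u k * sel_weight f K u l *
        (\<Sum>S\<in>Pow {..<d}. \<Sum>M\<in>Pow {..<d}.
           (1/2) ^ d * pm ^ card M * (1 - pm) ^ (d - card M) *
           (if matches d H (child (u k) (u l) S M) then 1 else 0)))"

definition alpha_sel :: "nat \<Rightarrow> ((nat \<Rightarrow> bool) \<Rightarrow> real) \<Rightarrow> nat \<Rightarrow> (nat \<Rightarrow> nat \<Rightarrow> bool)
    \<Rightarrow> (nat \<Rightarrow> bool option) \<Rightarrow> real" where
  "alpha_sel d f K u H = (\<Sum>k\<in>{k. k < K \<and> matches d H (u k)}. sel_weight f K u k)"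

end

theory Submission imports Defs begin

text \<open>Given the two parents, crossover and mutation act independently on the coordinates,
so the probability that the child matches \<open>H\<close> factors into one factor per fixed position;
each factor is the average over the two parents of the probability that the mutated bit of that
parent equals \<open>H j\<close>, namely \<open>1 - pm\<close> or \<open>pm\<close>. With \<open>pm \<le> 1/2\<close> a factor is therefore at least
\<open>1 - pm\<close> when both parents match \<open>H\<close>, at least \<open>1/2\<close> when one does and at least \<open>pm\<close> always.
Averaging these bounds over independently selected parents, each of which matches \<open>H\<close> with
probability \<open>alpha_sel\<close>, gives the claim (even with the middle term doubled).\<close>

lemma sum_Pow_prod:
  fixes h :: "'a \<Rightarrow> bool \<Rightarrow> 'b::comm_semiring_1"
  assumes "finite A"
  shows "(\<Sum>X\<in>Pow A. \<Prod>x\<in>A. h x (x \<in> X)) = (\<Prod>x\<in>A. h x True + h x False)"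
proof -
  have "(\<Prod>x\<in>A. h x (x \<in> X)) = (\<Prod>x\<in>X. h x True) * (\<Prod>x\<in>A - X. h x False)"
    if "X \<in> Pow A" for X
  proof -
    have "(\<Prod>x\<in>A. h x (x \<in> X)) = (\<Prod>x\<in>A. if x \<in> X then h x True else h x False)"
      by (rule prod.cong) auto
    also have "\<dots> = (\<Prod>x\<in>A \<inter> X. h x True) * (\<Prod>x\<in>A - X. h x False)"
      using assms by (simp add: prod.If_cases Diff_eq)
    finally show ?thesis using that by (simp add: Int_absorb1)
  qed
  then show ?thesis
    by (simp add: prod_add[OF assms])
qed

definition bit_match_prob :: "real \<Rightarrow> bool option \<Rightarrow> bool \<Rightarrow> real" where
  "bit_match_prob pm h x = (case h of None \<Rightarrow> 1 | Some v \<Rightarrow> if x = v then 1 - pm else pm)"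

definition offspring_match_prob ::
    "nat \<Rightarrow> real \<Rightarrow> (nat \<Rightarrow> bool option) \<Rightarrow> (nat \<Rightarrow> bool) \<Rightarrow> (nat \<Rightarrow> bool) \<Rightarrow> real" where
  "offspring_match_prob d pm H a b =
     (\<Sum>S\<in>Pow {..<d}. \<Sum>M\<in>Pow {..<d}.
        (1/2) ^ d * pm ^ card M * (1 - pm) ^ (d - card M) *
        (if matches d H (child a b S M) then 1 else 0))"

lemma matches_iff: "matches d H x \<longleftrightarrow> (\<forall>j<d. H j = None \<or> H j = Some (x j))"
  by (auto simp: matches_def fixed_pos_def)

lemma prod_indicator_eq_indicator_all:
  assumes "finite A"
  shows "(\<Prod>x\<in>A. if P x then 1 else 0 :: 'b::comm_semiring_1) = (if \<forall>x\<in>A. P x then 1 else 0)"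
  using assms by (induction A rule: finite_induct) auto

lemma offspring_term_eq_prod:
  fixes pm :: real
  assumes "M \<subseteq> {..<d}"
  shows "(1/2) ^ d * pm ^ card M * (1 - pm) ^ (d - card M) *
           (if matches d H (child a b S M) then 1 else 0) =
         (\<Prod>j<d. 1/2 * (if j \<in> M then pm else 1 - pm) *
            (if H j = None \<or> H j = Some ((if j \<in> S then a j else b j) \<noteq> (j \<in> M)) then 1 else 0))"
proof -
  have "pm ^ card M * (1 - pm) ^ (d - card M) = (\<Prod>j<d. if j \<in> M then pm else 1 - pm)"
    using assms by (simp add: prod.If_cases Int_absorb1 Diff_eq[symmetric]
        card_Diff_subset finite_subset)
  moreover have "(if matches d H (child a b S M) then 1 else 0) =
      (\<Prod>j<d. if H j = None \<or> H j = Some ((if j \<in> S then a j else b j) \<noteq> (j \<in> M)) then 1 else 0 :: real)"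
    by (subst prod_indicator_eq_indicator_all) (auto simp: matches_iff child_def)
  ultimately show ?thesis
    by (simp only: prod.distrib prod_constant card_lessThan mult.assoc)
qed

lemma offspring_match_prob_eq_prod:
  "offspring_match_prob d pm H a b =
     (\<Prod>j<d. (bit_match_prob pm (H j) (a j) + bit_match_prob pm (H j) (b j)) / 2)"
proof -
  define h where "h j s m = 1/2 * (if m then pm else 1 - pm) *
      (if H j = None \<or> H j = Some ((if s then a j else b j) \<noteq> m) then 1 else 0)" for j s m
  have "offspring_match_prob d pm H a b =
      (\<Sum>S\<in>Pow {..<d}. \<Sum>M\<in>Pow {..<d}. \<Prod>j<d. h j (j \<in> S) (j \<in> M))"
    unfolding offspring_match_prob_def h_def by (intro sum.cong refl offspring_term_eq_prod) auto
  also have "\<dots> = (\<Sum>S\<in>Pow {..<d}. \<Prod>j<d. h j (j \<in> S) True + h j (j \<in> S) False)"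
    by (intro sum.cong refl sum_Pow_prod) simp
  also have "\<dots> = (\<Prod>j<d. h j True True + h j True False + (h j False True + h j False False))"
    by (rule sum_Pow_prod[where h = "\<lambda>j s. h j s True + h j s False"]) simp
  also have "\<dots> = (\<Prod>j<d. (bit_match_prob pm (H j) (a j) + bit_match_prob pm (H j) (b j)) / 2)"
    by (intro prod.cong refl) (auto simp: h_def bit_match_prob_def split: option.split)
  finally show ?thesis .
qed

lemma pow_ord_le_offspring_match_prob:
  assumes "0 \<le> c"
    and "\<And>j. j \<in> fixed_pos d H \<Longrightarrow>
           c \<le> (bit_match_prob pm (H j) (a j) + bit_match_prob pm (H j) (b j)) / 2"
  shows "c ^ ord_schema d H \<le> offspring_match_prob d pm H a b"
proof -
  have fixed_sub: "fixed_pos d H \<subseteq> {..<d}"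
    by (auto simp: fixed_pos_def)
  have "c ^ ord_schema d H = (\<Prod>j\<in>fixed_pos d H. c)"
    by (simp add: ord_schema_def)
  also have "\<dots> \<le> (\<Prod>j\<in>fixed_pos d H.
      (bit_match_prob pm (H j) (a j) + bit_match_prob pm (H j) (b j)) / 2)"
    using assms by (intro prod_mono) auto
  also have "\<dots> = offspring_match_prob d pm H a b"
    unfolding offspring_match_prob_eq_prod
    using fixed_sub by (intro prod.mono_neutral_left) (auto simp: fixed_pos_def bit_match_prob_def)
  finally show ?thesis .
qed

lemma offspring_match_prob_lower:
  assumes "0 \<le> pm" "pm \<le> 1/2"
  shows "(if matches d H a \<and> matches d H b then (1 - pm) ^ ord_schema d H
          else if matches d H a \<or> matches d H b then (1/2) ^ ord_schema d H
          else pm ^ ord_schema d H) \<le> offspring_match_prob d pm H a b"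
proof -
  have bounds: "pm \<le> q" "matches d H a \<or> matches d H b \<Longrightarrow> 1/2 \<le> q"
    "matches d H a \<Longrightarrow> matches d H b \<Longrightarrow> 1 - pm \<le> q"
    if fixed: "j \<in> fixed_pos d H"
      and q: "q = (bit_match_prob pm (H j) (a j) + bit_match_prob pm (H j) (b j)) / 2" for j q
  proof -
    obtain v where v: "H j = Some v"
      using fixed by (auto simp: fixed_pos_def)
    have "matches d H x \<Longrightarrow> x j = v" for x
      using fixed v by (simp add: matches_def)
    then show "pm \<le> q" "matches d H a \<or> matches d H b \<Longrightarrow> 1/2 \<le> q"
      "matches d H a \<Longrightarrow> matches d H b \<Longrightarrow> 1 - pm \<le> q"
      using assms unfolding q bit_match_prob_def v by auto
  qed
  show ?thesis
    using assms by (auto intro!: pow_ord_le_offspring_match_prob bounds)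
qed

lemma weighted_pair_sum_ge:
  fixes w :: "'a \<Rightarrow> real" and g :: "'a \<Rightarrow> 'a \<Rightarrow> real"
  assumes "finite I" and "\<And>k. k \<in> I \<Longrightarrow> 0 \<le> w k" and "sum w I = 1"
    and "\<And>k l. k \<in> I \<Longrightarrow> l \<in> I \<Longrightarrow>
           (if P k \<and> P l then c1 else if P k \<or> P l then c2 else c3) \<le> g k l"
  defines "A \<equiv> sum w {k \<in> I. P k}"
  shows "c1 * A\<^sup>2 + 2 * c2 * A * (1 - A) + c3 * (1 - A)\<^sup>2 \<le> (\<Sum>k\<in>I. \<Sum>l\<in>I. w k * w l * g k l)"
proof -
  define i where "i k = (if P k then 1 else 0 :: real)" for k
  have A_eq: "A = (\<Sum>k\<in>I. w k * i k)"
    using assms(1) by (simp add: A_def i_def sum.inter_filter[symmetric] if_distrib cong: if_cong)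
  have B_eq: "1 - A = (\<Sum>k\<in>I. w k * (1 - i k))"
    using assms(3) by (simp add: A_eq algebra_simps sum_subtractf)
  have pair_sum: "(\<Sum>k\<in>I. \<Sum>l\<in>I. w k * w l * (x k * y l)) = (\<Sum>k\<in>I. w k * x k) * (\<Sum>l\<in>I. w l * y l)"
    for x y :: "'a \<Rightarrow> real"
    by (simp add: sum_product algebra_simps)
  have "c1 * A\<^sup>2 + 2 * c2 * A * (1 - A) + c3 * (1 - A)\<^sup>2 =
      c1 * (\<Sum>k\<in>I. \<Sum>l\<in>I. w k * w l * (i k * i l))
      + c2 * (\<Sum>k\<in>I. \<Sum>l\<in>I. w k * w l * (i k * (1 - i l)))
      + c2 * (\<Sum>k\<in>I. \<Sum>l\<in>I. w k * w l * ((1 - i k) * i l))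
      + c3 * (\<Sum>k\<in>I. \<Sum>l\<in>I. w k * w l * ((1 - i k) * (1 - i l)))"
    unfolding pair_sum A_eq[symmetric] B_eq[symmetric] by (simp add: power2_eq_square algebra_simps)
  also have "\<dots> = (\<Sum>k\<in>I. \<Sum>l\<in>I. w k * w l * (c1 * (i k * i l) + c2 * (i k * (1 - i l))
        + c2 * ((1 - i k) * i l) + c3 * ((1 - i k) * (1 - i l))))"
    by (simp only: sum.distrib sum_distrib_left distrib_left mult.left_commute)
  also have "\<dots> \<le> (\<Sum>k\<in>I. \<Sum>l\<in>I. w k * w l * g k l)"
  proof (intro sum_mono mult_left_mono)
    fix k l assume "k \<in> I" "l \<in> I"
    then show "c1 * (i k * i l) + c2 * (i k * (1 - i l)) + c2 * ((1 - i k) * i l)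
        + c3 * ((1 - i k) * (1 - i l)) \<le> g k l" "0 \<le> w k * w l"
      using assms(2) assms(4)[of k l] by (auto simp: i_def)
  qed
  finally show ?thesis .
qed

lemma sel_weight_nonneg: "0 \<le> sel_weight f K u k"
  unfolding sel_weight_def by (intro divide_nonneg_nonneg sum_nonneg) auto

lemma sum_sel_weight:
  assumes "K \<ge> 1"
  shows "(\<Sum>k<K. sel_weight f K u k) = 1"
proof -
  have "(\<Sum>i<K. exp (f (u i) / 2)) > 0"
    using assms by (intro sum_pos) (auto simp: lessThan_empty_iff)
  then show ?thesis
    by (simp add: sel_weight_def sum_divide_distrib[symmetric])
qed

theorem corollary3p4:
  fixes d K :: nat and pm :: real and f :: "(nat \<Rightarrow> bool) \<Rightarrow> real"
    and u :: "nat \<Rightarrow> nat \<Rightarrow> bool" and H :: "nat \<Rightarrow> bool option"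
  assumes "K \<ge> 1" and "0 < pm" and "pm \<le> 1/2"
  shows "alpha d pm f K u H \<ge>
     (1 - pm) ^ ord_schema d H * (alpha_sel d f K u H)\<^sup>2
     + (1/2) ^ ord_schema d H * alpha_sel d f K u H * (1 - alpha_sel d f K u H)
     + (1 - alpha_sel d f K u H)\<^sup>2 * pm ^ ord_schema d H"
proof -
  let ?w = "sel_weight f K u" and ?A = "alpha_sel d f K u H"
  have A_eq: "?A = sum ?w {k \<in> {..<K}. matches d H (u k)}"
    by (simp add: alpha_sel_def)
  have alpha_eq: "alpha d pm f K u H =
      (\<Sum>k<K. \<Sum>l<K. ?w k * ?w l * offspring_match_prob d pm H (u k) (u l))"
    unfolding alpha_def offspring_match_prob_def ..
  have "0 \<le> ?A"
    unfolding A_eq by (intro sum_nonneg sel_weight_nonneg)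
  moreover have "?A \<le> 1"
    unfolding A_eq sum_sel_weight[OF assms(1), of f u, symmetric]
    by (intro sum_mono2 sel_weight_nonneg) auto
  ultimately have middle_nonneg: "0 \<le> (1/2) ^ ord_schema d H * ?A * (1 - ?A)"
    by simp
  have "(1 - pm) ^ ord_schema d H * ?A\<^sup>2 + 2 * (1/2) ^ ord_schema d H * ?A * (1 - ?A)
      + pm ^ ord_schema d H * (1 - ?A)\<^sup>2 \<le> alpha d pm f K u H"
    unfolding alpha_eq A_eq using assms
    by (intro weighted_pair_sum_ge offspring_match_prob_lower sum_sel_weight sel_weight_nonneg) auto
  then show ?thesis
    using middle_nonneg by (simp add: algebra_simps)
qed

end
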